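(* Let $G$ be a finite group of even order and let $\mathcal{F}$ be a $1$-rotational $k$-factorization of $K_{\overline{G}}$. Then $k$ is even, and every involution of $G$ lies in the $G$-stabilizer of some factor $F\in\mathcal{F}$.
   Context: For a finite group $G$, $\overline{G}=G\cup\{\infty\}$, and $K_V$ denotes the complete graph on vertex set $V$. $G$ acts on $\overline{G}$ by right multiplication, with $\infty g=\infty$ for all $g\in G$; for a subgraph $F$ of $K_{\overline{G}}$ and $g\in G$, $Fg$ is the graph obtained by replacing every vertex $v$ by $vg$. A $k$-factor of $K_V$ is a spanning $k$-regular subgraph, and a $k$-factorization is a set of $k$-factors whose edge sets partition the edge set of $K_V$. A $k$-factorization $\mathcal{F}$ of $K_{\overline{G}}$ is $1$-rotational if $Fg\in\mathcal{F}$ for all $F\in\mathcal{F}$ and $g\in G$. The $G$-stabilizer of a factor $F$ is $\{g\in G: Fg=F\}$. An involution is an element of order $2$. *)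

theory Defs
  imports "HOL-Algebra.Algebra"
begin

text \<open>Vertices of K over G-bar: None plays the role of infinity, Some x the element x.
  A (spanning) subgraph of K_{G-bar} is given by its edge set: a set of 2-element vertex sets.\<close>

definition vbar :: "('a, 'b) monoid_scheme \<Rightarrow> 'a option set" where
  "vbar G = Some ` carrier G \<union> {None}"

definition complete_edges :: "'v set \<Rightarrow> 'v set set" where
  "complete_edges V = {e. e \<subseteq> V \<and> card e = 2}"

definition vdegree :: "'v set set \<Rightarrow> 'v \<Rightarrow> nat" where
  "vdegree F v = card {e \<in> F. v \<in> e}"

definition is_k_factor :: "nat \<Rightarrow> 'v set \<Rightarrow> 'v set set \<Rightarrow> bool" where
  "is_k_factor k V F \<longleftrightarrow> F \<subseteq> complete_edges V \<and> (\<forall>v\<in>V. vdegree F v = k)"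

definition is_k_factorization :: "nat \<Rightarrow> 'v set \<Rightarrow> 'v set set set \<Rightarrow> bool" where
  "is_k_factorization k V \<F> \<longleftrightarrow>
     (\<forall>F\<in>\<F>. is_k_factor k V F) \<and>
     (\<forall>e\<in>complete_edges V. \<exists>!F. F \<in> \<F> \<and> e \<in> F)"

definition vact :: "('a, 'b) monoid_scheme \<Rightarrow> 'a option \<Rightarrow> 'a \<Rightarrow> 'a option" where
  "vact G v g = (case v of None \<Rightarrow> None | Some x \<Rightarrow> Some (x \<otimes>\<^bsub>G\<^esub> g))"

definition gtrans :: "('a, 'b) monoid_scheme \<Rightarrow> 'a option set set \<Rightarrow> 'a \<Rightarrow> 'a option set set" where
  "gtrans G F g = (\<lambda>e. (\<lambda>v. vact G v g) ` e) ` F"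

definition one_rotational :: "('a, 'b) monoid_scheme \<Rightarrow> nat \<Rightarrow> 'a option set set set \<Rightarrow> bool" where
  "one_rotational G k \<F> \<longleftrightarrow> is_k_factorization k (vbar G) \<F> \<and>
     (\<forall>F\<in>\<F>. \<forall>g\<in>carrier G. gtrans G F g \<in> \<F>)"

definition gstab :: "('a, 'b) monoid_scheme \<Rightarrow> 'a option set set \<Rightarrow> 'a set" where
  "gstab G F = {g \<in> carrier G. gtrans G F g = F}"

end

theory Submission
  imports Defs
begin

text \<open>Double counting the incidences of a k-factor F of K_V gives k |V| = 2 |F|; as the
  vertex set G \<union> {\<infinity>} has odd size |G| + 1, k must be even. An involution g maps the edge
  {1, g} onto itself, so the factor containing that edge and its translate by g share an
  edge and therefore coincide.\<close>

lemma k_factor_handshake: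
  assumes "finite V" "is_k_factor k V F"
  shows "k * card V = 2 * card F"
proof -
  have F_sub: "F \<subseteq> complete_edges V" using assms(2) unfolding is_k_factor_def by blast
  have "finite F"
    by (rule finite_subset[OF F_sub]) (use assms(1) in \<open>auto simp: complete_edges_def\<close>)
  have "k * card V = (\<Sum>v\<in>V. vdegree F v)"
    using assms(2) unfolding is_k_factor_def by simp
  also have "\<dots> = (\<Sum>v\<in>V. \<Sum>e\<in>F. (if v \<in> e then 1 else 0::nat))"
    unfolding vdegree_def using \<open>finite F\<close> by (simp add: sum.If_cases Int_def conj_commute)
  also have "\<dots> = (\<Sum>e\<in>F. \<Sum>v\<in>V. (if v \<in> e then 1 else 0::nat))"
    by (rule sum.swap)
  also have "\<dots> = (\<Sum>e\<in>F. card (V \<inter> e))"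
    using assms(1) by (simp add: sum.If_cases)
  also have "\<dots> = (\<Sum>e\<in>F. 2)"
  proof (rule sum.cong)
    fix e assume "e \<in> F"
    then have "e \<subseteq> V" "card e = 2" using F_sub by (auto simp: complete_edges_def)
    then show "card (V \<inter> e) = 2" by (simp add: Int_absorb1)
  qed simp
  finally show ?thesis by simp
qed

lemma k_factorization_odd_order_even_degree:
  assumes "is_k_factorization k V \<F>" "finite V" "odd (card V)" "e \<in> complete_edges V"
  shows "even k"
proof -
  obtain F where "F \<in> \<F>"
    using assms(1,4) unfolding is_k_factorization_def by blast
  then have "is_k_factor k V F"
    using assms(1) unfolding is_k_factorization_def by blast
  then have "k * card V = 2 * card F"
    using k_factor_handshake assms(2) by blast
  then show ?thesis
    using assms(3) by (metis dvd_triv_left even_mult_iff)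
qed

lemma k_factorization_eq_if_common_edge:
  assumes "is_k_factorization k V \<F>" "e \<in> complete_edges V"
    and "F \<in> \<F>" "F' \<in> \<F>" "e \<in> F" "e \<in> F'"
  shows "F = F'"
  using assms unfolding is_k_factorization_def by blast

lemma card_vbar:
  assumes "finite (carrier G)"
  shows "card (vbar G) = order G + 1"
  using assms by (simp add: vbar_def card_image order_def)

lemma (in group) involution_fixes_edge:
  assumes "g \<in> carrier G" "ord g = 2"
  shows "(\<lambda>v. vact G v g) ` {Some \<one>, Some g} = {Some \<one>, Some g}"
proof -
  have "g \<otimes> g = \<one>"
    using pow_ord_eq_1[OF assms(1)] assms by (simp add: numeral_2_eq_2)
  then show ?thesis
    using assms(1) by (auto simp: vact_def)
qed

lemma (in group) involution_edge_in_complete_edges: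
  assumes "g \<in> carrier G" "ord g = 2"
  shows "{Some \<one>, Some g} \<in> complete_edges (vbar G)"
proof -
  have "g \<noteq> \<one>" using assms(2) ord_id by auto
  then show ?thesis
    using assms(1) by (auto simp: complete_edges_def vbar_def)
qed

lemma (in group) involution_in_gstab:
  assumes "one_rotational G k \<F>" "g \<in> carrier G" "ord g = 2"
  shows "\<exists>F\<in>\<F>. g \<in> gstab G F"
proof -
  let ?e = "{Some \<one>, Some g}"
  have fac: "is_k_factorization k (vbar G) \<F>"
    using assms(1) unfolding one_rotational_def by blast
  have e: "?e \<in> complete_edges (vbar G)"
    using involution_edge_in_complete_edges assms(2,3) .
  then obtain F where F: "F \<in> \<F>" "?e \<in> F"
    using fac unfolding is_k_factorization_def by blast
  have "gtrans G F g \<in> \<F>"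
    using assms(1,2) F(1) unfolding one_rotational_def by blast
  moreover have "?e \<in> gtrans G F g"
    using F(2) involution_fixes_edge[OF assms(2,3)] unfolding gtrans_def by (metis image_eqI)
  ultimately have "gtrans G F g = F"
    using k_factorization_eq_if_common_edge[OF fac e] F by blast
  then show ?thesis
    using F(1) assms(2) by (auto simp: gstab_def)
qed

theorem lemma2p4:
  fixes G :: "('a, 'b) monoid_scheme" and k :: nat and \<F> :: "'a option set set set"
  assumes "group G" and "finite (carrier G)" and "even (order G)"
    and "one_rotational G k \<F>"
  shows "even k \<and>
    (\<forall>g\<in>carrier G. group.ord G g = 2 \<longrightarrow> (\<exists>F\<in>\<F>. g \<in> gstab G F))"
proof
  interpret group G by fact
  have "{None, Some \<one>\<^bsub>G\<^esub>} \<in> complete_edges (vbar G)"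
    by (auto simp: complete_edges_def vbar_def)
  moreover have "finite (vbar G)"
    using assms(2) by (simp add: vbar_def)
  moreover have "odd (card (vbar G))"
    using assms(3) card_vbar[OF assms(2)] by simp
  ultimately show "even k"
    using k_factorization_odd_order_even_degree assms(4) unfolding one_rotational_def by blast
  show "\<forall>g\<in>carrier G. ord g = 2 \<longrightarrow> (\<exists>F\<in>\<F>. g \<in> gstab G F)"
    using involution_in_gstab assms(4) by blast
qed

end
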